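(* Let $\theta\in(0,\pi/2)$. For a qubit operator write $\rho=\tfrac12(\mathbb{1}+x\hat X+z\hat Z)$ with Pauli operators $\hat X,\hat Z$. Consider the pure states $|\psi\rangle\langle\psi|$, $|\bar\psi\rangle\langle\bar\psi|$, $|\phi\rangle\langle\phi|$, $|\bar\phi\rangle\langle\bar\phi|$ with Bloch vectors $(x,z)=(\sin\theta,\cos\theta)$, $(-\sin\theta,-\cos\theta)$, $(\sin\theta,-\cos\theta)$, $(-\sin\theta,\cos\theta)$ respectively, and the three binary measurements $M_\psi=\{|\psi\rangle\langle\psi|,|\bar\psi\rangle\langle\bar\psi|\}$, $M_\phi=\{|\phi\rangle\langle\phi|,|\bar\phi\rangle\langle\bar\phi|\}$, $M_g=\{E_{g_\psi},E_{g_\phi}\}$ with $E_{g_\psi}=|0\rangle\langle0|$, $E_{g_\phi}=|1\rangle\langle1|$ ($Z$ basis). For $r\in[0,1]$, replace every effect $E$ by $\mathcal{D}^{\mathrm{deph}}_r(E):=(1-r)E+r\sum_{i\in\{0,1\}}\langle i|E|i\rangle\,|i\rangle\langle i|$, keeping the four states unchanged. Then the minimal $r$ for which the resulting prepare-and-measure scenario admits a noncontextual ontological model is $$r^{\mathrm{deph}}_{\min}=1-\frac{1-\cos\theta}{\sin^2\theta}.$$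
   Context: A noncontextual ontological model for a quantum prepare-and-measure scenario consisting of a finite set $\mathcal{S}$ of density operators and a finite set $\mathcal{E}$ of effects (the elements of finitely many POVMs) is: a finite set $\Lambda$; a map $\rho\mapsto\mu_\rho$ from the convex hull of $\mathcal{S}$ to probability distributions on $\Lambda$ that is convex-linear; and a map $E\mapsto\xi_E$ from the convex hull of $\mathcal{E}\cup\{0,\mathbb{1}\}$ to functions $\Lambda\to[0,1]$ that is convex-linear with $\xi_{\mathbb{1}}\equiv1$; such that $\mathrm{Tr}(E\rho)=\sum_{\lambda}\xi_E(\lambda)\mu_\rho(\lambda)$ for all $\rho\in\mathcal{S}$, $E\in\mathcal{E}$. Convex-linearity encodes noncontextuality: operationally equivalent (equal-operator) mixtures receive identical ontological representations. *)

theory Defs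
  imports "HOL-Analysis.Analysis"
begin

type_synonym qop = "complex^2^2"

definition qtr :: "qop \<Rightarrow> complex" where
  "qtr A = A $ 1 $ 1 + A $ 2 $ 2"

definition pauliX :: qop where
  "pauliX = (\<chi> i j. if i = j then 0 else 1)"

definition pauliZ :: qop where
  "pauliZ = (\<chi> i j. if i = j then (if i = 1 then 1 else -1) else 0)"

definition bloch :: "real \<Rightarrow> real \<Rightarrow> qop" where
  "bloch x z = (1/2::real) *\<^sub>R (mat 1 + x *\<^sub>R pauliX + z *\<^sub>R pauliZ)"

definition proj0 :: qop where
  "proj0 = (\<chi> i j. if i = 1 \<and> j = 1 then 1 else 0)"

definition proj1 :: qop where
  "proj1 = (\<chi> i j. if i = 2 \<and> j = 2 then 1 else 0)"

definition deph :: "real \<Rightarrow> qop \<Rightarrow> qop" where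
  "deph r E = (1 - r) *\<^sub>R E + r *\<^sub>R (\<chi> i j. if i = j then E $ i $ i else 0)"

text \<open>The ontic space is a finite set of
  naturals (any finite set is equipotent to one).\<close>
definition nc_model :: "qop set \<Rightarrow> qop set \<Rightarrow> bool" where
  "nc_model S E \<longleftrightarrow>
    (\<exists>(\<Lambda>::nat set) (\<mu>::qop \<Rightarrow> nat \<Rightarrow> real) (\<xi>::qop \<Rightarrow> nat \<Rightarrow> real).
      finite \<Lambda> \<and>
      (\<forall>\<rho>\<in>convex hull S. (\<forall>l\<in>\<Lambda>. 0 \<le> \<mu> \<rho> l) \<and> (\<Sum>l\<in>\<Lambda>. \<mu> \<rho> l) = 1) \<and>
      (\<forall>a\<in>convex hull S. \<forall>b\<in>convex hull S. \<forall>t::real. 0 \<le> t \<and> t \<le> 1 \<longrightarrow>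
         (\<forall>l\<in>\<Lambda>. \<mu> (t *\<^sub>R a + (1 - t) *\<^sub>R b) l = t * \<mu> a l + (1 - t) * \<mu> b l)) \<and>
      (\<forall>e\<in>convex hull (E \<union> {0, mat 1}). \<forall>l\<in>\<Lambda>. 0 \<le> \<xi> e l \<and> \<xi> e l \<le> 1) \<and>
      (\<forall>a\<in>convex hull (E \<union> {0, mat 1}). \<forall>b\<in>convex hull (E \<union> {0, mat 1}).
         \<forall>t::real. 0 \<le> t \<and> t \<le> 1 \<longrightarrow>
         (\<forall>l\<in>\<Lambda>. \<xi> (t *\<^sub>R a + (1 - t) *\<^sub>R b) l = t * \<xi> a l + (1 - t) * \<xi> b l)) \<and>
      (\<forall>l\<in>\<Lambda>. \<xi> (mat 1) l = 1) \<and>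
      (\<forall>\<rho>\<in>S. \<forall>e\<in>E. qtr (e ** \<rho>) = complex_of_real (\<Sum>l\<in>\<Lambda>. \<xi> e l * \<mu> \<rho> l)))"

definition states :: "real \<Rightarrow> qop set" where
  "states \<theta> = {bloch (sin \<theta>) (cos \<theta>), bloch (- sin \<theta>) (- cos \<theta>),
               bloch (sin \<theta>) (- cos \<theta>), bloch (- sin \<theta>) (cos \<theta>)}"

text \<open>Effects of M_psi, M_phi (the state projectors) and M_g (Z basis), each dephased.\<close>
definition deph_effects :: "real \<Rightarrow> real \<Rightarrow> qop set" where
  "deph_effects \<theta> r = deph r ` (states \<theta> \<union> {proj0, proj1})"

end

theory Submission
  imports Defs
begin

text \<open>Write \<open>a = (1 - r) sin \<theta>\<close> for the X coordinate of the dephased state projectors.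
  Each antipodal pair \<open>\<psi>\<close>, \<open>\<psi>\<close>-bar and \<open>\<phi>\<close>, \<open>\<phi>\<close>-bar mixes to the maximally mixed state,
  so a noncontextual model gives both mixtures the same distribution over ontic states. Combined
  with response functions in \<open>[0,1]\<close> for two dephased projectors and \<open>|0\<rangle>\<langle>0|\<close>, this yields an
  inequality at each ontic state whose average reads \<open>a sin \<theta> + cos \<theta> \<le> 1\<close>. Conversely, under
  this inequality four ontic states suffice: two reproduce the Z statistics with weight \<open>cos \<theta>\<close>,
  two the X statistics with weight \<open>1 - cos \<theta>\<close>, with X slopes \<open>a\<close> on states and \<open>1/a\<close> on
  effects. As \<open>sin\<^sup>2 \<theta> = (1 - cos \<theta>)(1 + cos \<theta>)\<close>, the inequality reads
  \<open>(1 - r)(1 + cos \<theta>) \<le> 1\<close>, and equality gives the claimed value of \<open>r\<close>.\<close>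

definition born :: "qop \<Rightarrow> qop \<Rightarrow> real" where
  "born E \<rho> = Re (qtr (E ** \<rho>))"

lemma bloch_nth:
  "bloch x z $ i $ j =
    (if i = 1 then (if j = 1 then complex_of_real ((1 + z) / 2) else complex_of_real (x / 2))
     else (if j = 1 then complex_of_real (x / 2) else complex_of_real ((1 - z) / 2)))"
  using exhaust_2[of i] exhaust_2[of j]
  by (auto simp: bloch_def pauliX_def pauliZ_def mat_def) (auto simp: scaleR_conv_of_real field_simps)

lemma qop_eqI: "(\<And>i j. A $ i $ j = B $ i $ j) \<Longrightarrow> A = (B :: qop)"
  by (simp add: vec_eq_iff)

lemma qtr_bloch_mult: "qtr (bloch a b ** bloch x z) = complex_of_real ((1 + a * x + b * z) / 2)"
  by (simp add: qtr_def matrix_matrix_mult_def sum_2 bloch_nth field_simps)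

lemma born_bloch: "born (bloch a b) (bloch x z) = (1 + a * x + b * z) / 2"
  by (simp add: born_def qtr_bloch_mult)

lemma deph_bloch: "deph r (bloch x z) = bloch ((1 - r) * x) z"
proof (rule qop_eqI)
  fix i j
  show "deph r (bloch x z) $ i $ j = bloch ((1 - r) * x) z $ i $ j"
    using exhaust_2[of i] exhaust_2[of j]
    by (auto simp: deph_def bloch_nth) (auto simp: scaleR_conv_of_real field_simps)
qed

lemma proj0_eq_bloch: "proj0 = bloch 0 1"
  by (rule qop_eqI) (use exhaust_2 in \<open>auto simp: proj0_def bloch_nth\<close>)

lemma proj1_eq_bloch: "proj1 = bloch 0 (-1)"
  by (rule qop_eqI) (use exhaust_2 in \<open>auto simp: proj1_def bloch_nth\<close>)

lemma bloch_midpoint: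
  "(1/2::real) *\<^sub>R bloch x z + (1/2::real) *\<^sub>R bloch x' z' = bloch ((x + x') / 2) ((z + z') / 2)"
proof (rule qop_eqI)
  fix i j
  show "((1/2::real) *\<^sub>R bloch x z + (1/2::real) *\<^sub>R bloch x' z') $ i $ j
      = bloch ((x + x') / 2) ((z + z') / 2) $ i $ j"
    using exhaust_2[of i] exhaust_2[of j]
    by (auto simp: bloch_nth) (auto simp: scaleR_conv_of_real field_simps)
qed

lemma deph_effects_eq:
  "deph_effects \<theta> r =
    {bloch 0 1, bloch 0 (-1),
     bloch ((1 - r) * sin \<theta>) (cos \<theta>), bloch (- ((1 - r) * sin \<theta>)) (- cos \<theta>),
     bloch ((1 - r) * sin \<theta>) (- cos \<theta>), bloch (- ((1 - r) * sin \<theta>)) (cos \<theta>)}"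
  by (simp add: deph_effects_def states_def proj0_eq_bloch proj1_eq_bloch deph_bloch)

text \<open>At a single ontic state: \<open>m\<^sub>i\<close> are the weights of four states, \<open>u, v, w\<close> the responses
  of three effects, and \<open>m\<^sub>1 + m\<^sub>2 = m\<^sub>3 + m\<^sub>4\<close> expresses noncontextuality for two
  decompositions of the same mixture.\<close>
lemma noncontextual_pointwise_bound:
  fixes m1 m2 m3 m4 u v w :: real
  assumes "0 \<le> m1" "0 \<le> m2" "0 \<le> m3" "0 \<le> m4" "m1 + m2 = m3 + m4"
    and "0 \<le> u" "u \<le> 1" "0 \<le> v" "v \<le> 1" "0 \<le> w" "w \<le> 1"
  shows "(m1 - m2) * (u - v + 2 * w - 1) + (m4 - m3) * (v - u + 2 * w - 1) \<le> 2 * (m1 + m2)"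
proof -
  define P Q where "P = u - v + 2 * w - 1" and "Q = v - u + 2 * w - 1"
  have "(m1 - m2) * P \<le> \<bar>m1 - m2\<bar> * \<bar>P\<bar>"
    by (metis abs_ge_self abs_mult)
  also have "\<dots> \<le> (m1 + m2) * \<bar>P\<bar>"
    using assms by (intro mult_right_mono) auto
  finally have P_bound: "(m1 - m2) * P \<le> (m1 + m2) * \<bar>P\<bar>" .
  have "(m4 - m3) * Q \<le> \<bar>m4 - m3\<bar> * \<bar>Q\<bar>"
    by (metis abs_ge_self abs_mult)
  also have "\<dots> \<le> (m1 + m2) * \<bar>Q\<bar>"
    using assms by (intro mult_right_mono) auto
  finally have Q_bound: "(m4 - m3) * Q \<le> (m1 + m2) * \<bar>Q\<bar>" .
  have "(m1 + m2) * (\<bar>P\<bar> + \<bar>Q\<bar>) \<le> (m1 + m2) * 2"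
    using assms unfolding P_def Q_def by (intro mult_left_mono) auto
  with P_bound Q_bound show ?thesis
    unfolding P_def Q_def by (simp add: algebra_simps)
qed

lemma nc_model_inequality:
  assumes "nc_model S E"
    and "{\<rho>1, \<rho>2, \<rho>3, \<rho>4} \<subseteq> S" and "{eu, ev, ew} \<subseteq> E"
    and "(1/2::real) *\<^sub>R \<rho>1 + (1/2::real) *\<^sub>R \<rho>2 = (1/2::real) *\<^sub>R \<rho>3 + (1/2::real) *\<^sub>R \<rho>4"
  shows "(born eu \<rho>1 - born eu \<rho>2) - (born ev \<rho>1 - born ev \<rho>2) + 2 * (born ew \<rho>1 - born ew \<rho>2)
       + (born ev \<rho>4 - born ev \<rho>3) - (born eu \<rho>4 - born eu \<rho>3) + 2 * (born ew \<rho>4 - born ew \<rho>3) \<le> 4"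
proof -
  obtain \<Lambda> :: "nat set" and \<mu> \<xi> where "finite \<Lambda>"
    and \<mu>_prob: "\<forall>\<rho>\<in>convex hull S. (\<forall>l\<in>\<Lambda>. 0 \<le> \<mu> \<rho> l) \<and> (\<Sum>l\<in>\<Lambda>. \<mu> \<rho> l) = 1"
    and \<mu>_convex: "\<forall>a\<in>convex hull S. \<forall>b\<in>convex hull S. \<forall>t::real. 0 \<le> t \<and> t \<le> 1 \<longrightarrow>
         (\<forall>l\<in>\<Lambda>. \<mu> (t *\<^sub>R a + (1 - t) *\<^sub>R b) l = t * \<mu> a l + (1 - t) * \<mu> b l)"
    and \<xi>_bounds: "\<forall>e\<in>convex hull (E \<union> {0, mat 1}). \<forall>l\<in>\<Lambda>. 0 \<le> \<xi> e l \<and> \<xi> e l \<le> 1"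
    and born_rule: "\<forall>\<rho>\<in>S. \<forall>e\<in>E. qtr (e ** \<rho>) = complex_of_real (\<Sum>l\<in>\<Lambda>. \<xi> e l * \<mu> \<rho> l)"
    using assms(1) unfolding nc_model_def by blast
  have in_hull: "\<rho> \<in> convex hull S" if "\<rho> \<in> {\<rho>1, \<rho>2, \<rho>3, \<rho>4}" for \<rho>
    using that assms(2) by (auto intro: hull_inc)
  have \<mu>_nonneg: "0 \<le> \<mu> \<rho> l" if "\<rho> \<in> {\<rho>1, \<rho>2, \<rho>3, \<rho>4}" "l \<in> \<Lambda>" for \<rho> l
    using \<mu>_prob in_hull[OF that(1)] that(2) by auto
  have \<mu>_sum: "(\<Sum>l\<in>\<Lambda>. \<mu> \<rho> l) = 1" if "\<rho> \<in> {\<rho>1, \<rho>2, \<rho>3, \<rho>4}" for \<rho>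
    using \<mu>_prob in_hull[OF that] by auto
  have \<xi>_unit: "0 \<le> \<xi> e l \<and> \<xi> e l \<le> 1" if "e \<in> {eu, ev, ew}" "l \<in> \<Lambda>" for e l
    using \<xi>_bounds that assms(3) by (auto intro: hull_inc)
  have born_eq: "born e \<rho> = (\<Sum>l\<in>\<Lambda>. \<xi> e l * \<mu> \<rho> l)" if "\<rho> \<in> S" "e \<in> E" for \<rho> e
    using born_rule that by (simp add: born_def)
  have midpoint: "\<mu> \<rho>1 l + \<mu> \<rho>2 l = \<mu> \<rho>3 l + \<mu> \<rho>4 l" if "l \<in> \<Lambda>" for l
    using \<mu>_convex[rule_format, of \<rho>1 \<rho>2 "1/2" l] \<mu>_convex[rule_format, of \<rho>3 \<rho>4 "1/2" l]
      in_hull assms(4) that by simp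
  let ?g = "\<lambda>l. (\<mu> \<rho>1 l - \<mu> \<rho>2 l) * (\<xi> eu l - \<xi> ev l + 2 * \<xi> ew l - 1)
             + (\<mu> \<rho>4 l - \<mu> \<rho>3 l) * (\<xi> ev l - \<xi> eu l + 2 * \<xi> ew l - 1)"
  have "(\<Sum>l\<in>\<Lambda>. ?g l) \<le> (\<Sum>l\<in>\<Lambda>. 2 * (\<mu> \<rho>1 l + \<mu> \<rho>2 l))"
  proof (rule sum_mono)
    fix l assume "l \<in> \<Lambda>"
    then show "?g l \<le> 2 * (\<mu> \<rho>1 l + \<mu> \<rho>2 l)"
      using \<mu>_nonneg \<xi>_unit midpoint by (intro noncontextual_pointwise_bound) auto
  qed
  moreover have "(\<Sum>l\<in>\<Lambda>. 2 * (\<mu> \<rho>1 l + \<mu> \<rho>2 l)) = 4"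
    using \<mu>_sum by (simp add: sum.distrib flip: sum_distrib_left)
  moreover have "?g l = (\<xi> eu l * \<mu> \<rho>1 l - \<xi> eu l * \<mu> \<rho>2 l) - (\<xi> ev l * \<mu> \<rho>1 l - \<xi> ev l * \<mu> \<rho>2 l)
      + 2 * (\<xi> ew l * \<mu> \<rho>1 l - \<xi> ew l * \<mu> \<rho>2 l)
      + (\<xi> ev l * \<mu> \<rho>4 l - \<xi> ev l * \<mu> \<rho>3 l) - (\<xi> eu l * \<mu> \<rho>4 l - \<xi> eu l * \<mu> \<rho>3 l)
      + 2 * (\<xi> ew l * \<mu> \<rho>4 l - \<xi> ew l * \<mu> \<rho>3 l)
      - (\<mu> \<rho>1 l + \<mu> \<rho>4 l) + (\<mu> \<rho>2 l + \<mu> \<rho>3 l)" for l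
    by (simp add: algebra_simps)
  then have "(\<Sum>l\<in>\<Lambda>. ?g l) =
      (born eu \<rho>1 - born eu \<rho>2) - (born ev \<rho>1 - born ev \<rho>2) + 2 * (born ew \<rho>1 - born ew \<rho>2)
       + (born ev \<rho>4 - born ev \<rho>3) - (born eu \<rho>4 - born eu \<rho>3) + 2 * (born ew \<rho>4 - born ew \<rho>3)"
    using assms(2,3) \<mu>_sum
    by (simp only: sum.distrib sum_subtractf flip: sum_distrib_left) (simp add: born_eq)
  ultimately show ?thesis by linarith
qed

lemma nc_modelI_linear:
  fixes f g :: "nat \<Rightarrow> qop \<Rightarrow> real"
  assumes "finite \<Lambda>"
    and f_linear: "\<And>l. l \<in> \<Lambda> \<Longrightarrow> linear (f l)" and g_linear: "\<And>l. l \<in> \<Lambda> \<Longrightarrow> linear (g l)"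
    and f_nonneg: "\<And>\<rho> l. \<rho> \<in> S \<Longrightarrow> l \<in> \<Lambda> \<Longrightarrow> 0 \<le> f l \<rho>"
    and f_sum: "\<And>\<rho>. \<rho> \<in> S \<Longrightarrow> (\<Sum>l\<in>\<Lambda>. f l \<rho>) = 1"
    and g_bounds: "\<And>e l. e \<in> E \<Longrightarrow> l \<in> \<Lambda> \<Longrightarrow> 0 \<le> g l e \<and> g l e \<le> 1"
    and g_unit: "\<And>l. l \<in> \<Lambda> \<Longrightarrow> g l (mat 1) = 1"
    and born_rule: "\<And>\<rho> e. \<rho> \<in> S \<Longrightarrow> e \<in> E \<Longrightarrow> qtr (e ** \<rho>) = complex_of_real (\<Sum>l\<in>\<Lambda>. g l e * f l \<rho>)"
  shows "nc_model S E"
proof -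
  have hull_into: "h ` (convex hull A) \<subseteq> C" if "linear h" "convex C" "h ` A \<subseteq> C"
    for h :: "qop \<Rightarrow> real" and A C
    using that by (metis convex_hull_linear_image hull_minimal)
  have affine: "h (t *\<^sub>R a + (1 - t) *\<^sub>R b) = t * h a + (1 - t) * h b" if "linear h"
    for h :: "qop \<Rightarrow> real" and t a b
    using that by (simp add: linear_add linear_scale)
  have f_hull: "0 \<le> f l \<rho>" if "\<rho> \<in> convex hull S" "l \<in> \<Lambda>" for \<rho> l
    using hull_into[of "f l" "{0..}" S] f_linear f_nonneg that by auto
  have sum_hull: "(\<Sum>l\<in>\<Lambda>. f l \<rho>) = 1" if "\<rho> \<in> convex hull S" for \<rho>
    using hull_into[of "\<lambda>\<rho>. \<Sum>l\<in>\<Lambda>. f l \<rho>" "{1}" S] linear_compose_sum[of \<Lambda> f] f_linear f_sum that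
    by auto
  have g_hull: "0 \<le> g l e \<and> g l e \<le> 1" if "e \<in> convex hull (E \<union> {0, mat 1})" "l \<in> \<Lambda>" for e l
  proof -
    have "g l ` (E \<union> {0, mat 1}) \<subseteq> {0..1}"
      using g_bounds g_unit linear_0[OF g_linear] that(2) by auto
    then have "g l ` (convex hull (E \<union> {0, mat 1})) \<subseteq> {0..1}"
      by (intro hull_into g_linear that(2)) auto
    then show ?thesis
      using that(1) by auto
  qed
  show ?thesis
    unfolding nc_model_def
    by (rule exI[of _ \<Lambda>], rule exI[of _ "\<lambda>\<rho> l. f l \<rho>"], rule exI[of _ "\<lambda>e l. g l e"])
      (use assms(1) f_hull sum_hull g_hull g_unit born_rule affine f_linear g_linear in auto)
qed

lemma deph_nc_model_bound:
  assumes "nc_model (states \<theta>) (deph_effects \<theta> r)"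
  shows "(1 - r) * (sin \<theta>)\<^sup>2 \<le> 1 - cos \<theta>"
proof -
  define s c a where "s = sin \<theta>" and "c = cos \<theta>" and "a = (1 - r) * sin \<theta>"
  have states: "{bloch s c, bloch (-s) (-c), bloch s (-c), bloch (-s) c} \<subseteq> states \<theta>"
    by (simp add: states_def s_def c_def)
  have effects: "{bloch a c, bloch (-a) c, bloch 0 1} \<subseteq> deph_effects \<theta> r"
    by (simp add: deph_effects_eq a_def c_def)
  have "(1/2::real) *\<^sub>R bloch s c + (1/2::real) *\<^sub>R bloch (-s) (-c)
      = (1/2::real) *\<^sub>R bloch s (-c) + (1/2::real) *\<^sub>R bloch (-s) c"
    by (simp add: bloch_midpoint)
  from nc_model_inequality[OF assms states effects this]
  have "4 * (a * s) + 4 * c \<le> 4"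
    unfolding born_bloch by (simp add: field_simps)
  then show ?thesis
    unfolding a_def s_def c_def by (simp add: power2_eq_square algebra_simps)
qed

definition bloch_x :: "qop \<Rightarrow> real" where
  "bloch_x A = Re (A $ 1 $ 2 + A $ 2 $ 1)"

definition bloch_z :: "qop \<Rightarrow> real" where
  "bloch_z A = Re (A $ 1 $ 1 - A $ 2 $ 2)"

definition zx_split :: "real \<Rightarrow> real \<Rightarrow> real \<Rightarrow> nat \<Rightarrow> qop \<Rightarrow> real" where
  "zx_split \<alpha> \<beta> \<kappa> l A =
    (if l = 0 then \<alpha> * Re (qtr A) + bloch_z A
     else if l = 1 then \<alpha> * Re (qtr A) - bloch_z A
     else if l = 2 then \<beta> * Re (qtr A) + \<kappa> * bloch_x A
     else \<beta> * Re (qtr A) - \<kappa> * bloch_x A) / 2"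

lemma linear_zx_split: "linear (zx_split \<alpha> \<beta> \<kappa> l)"
  by (rule linearI) (auto simp: zx_split_def qtr_def bloch_x_def bloch_z_def algebra_simps)

lemma zx_split_bloch:
  "zx_split \<alpha> \<beta> \<kappa> l (bloch x z) =
    (if l = 0 then \<alpha> + z else if l = 1 then \<alpha> - z else if l = 2 then \<beta> + \<kappa> * x else \<beta> - \<kappa> * x) / 2"
  by (simp add: zx_split_def qtr_def bloch_x_def bloch_z_def bloch_nth field_simps)

lemma zx_split_one: "zx_split 1 1 \<kappa> l (mat 1) = 1"
  by (simp add: zx_split_def qtr_def bloch_x_def bloch_z_def mat_def)

lemma sum_zx_split_bloch: "(\<Sum>l\<in>{0,1,2,3}. zx_split \<alpha> \<beta> \<kappa> l (bloch x z)) = \<alpha> + \<beta>"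
  by (simp add: zx_split_bloch field_simps)

lemma sum_zx_split_mult_bloch:
  "(\<Sum>l\<in>{0,1,2,3}. zx_split 1 1 \<kappa>' l (bloch y w) * zx_split \<alpha> \<beta> \<kappa> l (bloch x z))
    = (\<alpha> + \<beta> + w * z + (\<kappa>' * y * \<kappa>) * x) / 2"
  by (simp add: zx_split_bloch field_simps)

lemma deph_nc_modelI:
  assumes "0 \<le> cos \<theta>" and "r \<le> 1" and "(1 - r) * (sin \<theta>)\<^sup>2 \<le> 1 - cos \<theta>"
  shows "nc_model (states \<theta>) (deph_effects \<theta> r)"
proof -
  define s c a b where "s = sin \<theta>" and "c = cos \<theta>" and "a = (1 - r) * sin \<theta>" and "b = 1 / a"
  have as_bounds: "0 \<le> a * s" "a * s \<le> 1 - c"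
    using assms(2,3) by (simp_all add: a_def s_def c_def power2_eq_square mult.assoc)
  have effect_shape: "\<exists>y w. e = bloch y w \<and> \<bar>w\<bar> \<le> 1 \<and> (y = a \<or> y = - a \<or> y = 0)"
    if "e \<in> deph_effects \<theta> r" for e
    using that abs_cos_le_one[of \<theta>] unfolding deph_effects_eq a_def[symmetric]
    by (elim insertE emptyE) force+
  \<comment> \<open>For \<open>r = 1\<close> we get \<open>a = 0\<close> and \<open>b = 1 / 0 = 0\<close>; all effects then have X coordinate 0,
    so the slope conditions still hold.\<close>
  have slopes: "b * y * a = y" and slope_bound: "\<bar>b * y\<bar> \<le> 1" if "y = a \<or> y = - a \<or> y = 0" for y
    using that unfolding b_def by (cases "a = 0"; auto)+
  show ?thesis
  proof (rule nc_modelI_linear[where \<Lambda> = "{0, 1, 2, 3}" and f = "zx_split c (1 - c) a"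
        and g = "zx_split 1 1 b"])
    fix \<rho> l assume "\<rho> \<in> states \<theta>" "l \<in> {0, 1, 2, 3 :: nat}"
    then show "0 \<le> zx_split c (1 - c) a l \<rho>"
      using assms(1) as_bounds by (auto simp: states_def zx_split_bloch s_def c_def)
  next
    fix \<rho> assume "\<rho> \<in> states \<theta>"
    then obtain x z where "\<rho> = bloch x z"
      unfolding states_def by blast
    then show "(\<Sum>l\<in>{0, 1, 2, 3}. zx_split c (1 - c) a l \<rho>) = 1"
      by (simp only: sum_zx_split_bloch)
  next
    fix e l assume e: "e \<in> deph_effects \<theta> r" and l: "l \<in> {0, 1, 2, 3 :: nat}"
    from effect_shape[OF e] obtain y w where "e = bloch y w" and "\<bar>w\<bar> \<le> 1" and "\<bar>b * y\<bar> \<le> 1"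
      using slope_bound by blast
    then show "0 \<le> zx_split 1 1 b l e \<and> zx_split 1 1 b l e \<le> 1"
      using l by (auto simp: zx_split_bloch abs_le_iff)
  next
    fix \<rho> e assume "\<rho> \<in> states \<theta>" "e \<in> deph_effects \<theta> r"
    then obtain x z y w where \<rho>: "\<rho> = bloch x z" and e: "e = bloch y w" and y: "b * y * a = y"
      using effect_shape slopes unfolding states_def by blast
    have sum_eq: "(\<Sum>l\<in>{0, 1, 2, 3}. zx_split 1 1 b l e * zx_split c (1 - c) a l \<rho>) = (1 + y * x + w * z) / 2"
      unfolding \<rho> e sum_zx_split_mult_bloch y by simp
    show "qtr (e ** \<rho>) = complex_of_real (\<Sum>l\<in>{0, 1, 2, 3}. zx_split 1 1 b l e * zx_split c (1 - c) a l \<rho>)"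
      unfolding sum_eq unfolding \<rho> e by (rule qtr_bloch_mult)
  qed (simp_all add: linear_zx_split zx_split_one)
qed

lemma sin_squared_factor:
  fixes \<theta> :: real
  shows "(sin \<theta>)\<^sup>2 = (1 - cos \<theta>) * (1 + cos \<theta>)"
  using sin_squared_eq[of \<theta>] by (simp add: power2_eq_square algebra_simps)

lemma deph_nc_model_iff:
  assumes "0 \<le> cos \<theta>" and "cos \<theta> < 1" and "r \<le> 1"
  shows "nc_model (states \<theta>) (deph_effects \<theta> r) \<longleftrightarrow> (1 - r) * (1 + cos \<theta>) \<le> 1"
proof -
  have "(1 - r) * (sin \<theta>)\<^sup>2 \<le> 1 - cos \<theta>
      \<longleftrightarrow> (1 - cos \<theta>) * ((1 - r) * (1 + cos \<theta>)) \<le> (1 - cos \<theta>) * 1"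
    by (simp add: sin_squared_factor algebra_simps)
  also have "\<dots> \<longleftrightarrow> (1 - r) * (1 + cos \<theta>) \<le> 1"
    using assms(2) by (simp add: mult_le_cancel_left_pos)
  finally show ?thesis
    using deph_nc_model_bound deph_nc_modelI assms(1,3) by blast
qed

lemma one_minus_cos_div_sin_squared:
  fixes \<theta> :: real
  assumes "sin \<theta> \<noteq> 0"
  shows "(1 - cos \<theta>) / (sin \<theta>)\<^sup>2 = 1 / (1 + cos \<theta>)"
proof -
  from assms have "1 - cos \<theta> \<noteq> 0" and "1 + cos \<theta> \<noteq> 0"
    using sin_squared_factor[of \<theta>] by (auto simp: power2_eq_square)
  then show ?thesis
    by (simp add: sin_squared_factor)
qed

theorem mainTheorem2:
  fixes \<theta> :: real
  assumes "0 < \<theta>" and "\<theta> < pi / 2"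
  shows "(1 - (1 - cos \<theta>) / (sin \<theta>)\<^sup>2) \<in> {r \<in> {0..1}. nc_model (states \<theta>) (deph_effects \<theta> r)}
       \<and> (\<forall>r \<in> {r \<in> {0..1}. nc_model (states \<theta>) (deph_effects \<theta> r)}.
             1 - (1 - cos \<theta>) / (sin \<theta>)\<^sup>2 \<le> r)"
proof -
  have "0 < sin \<theta>" and "0 < cos \<theta>"
    using assms by (auto intro: sin_gt_zero cos_gt_zero)
  have "cos \<theta> < 1"
    using \<open>0 < sin \<theta>\<close> sin_squared_factor[of \<theta>] by (cases "cos \<theta> = 1") (simp_all add: less_le)
  have model_iff: "nc_model (states \<theta>) (deph_effects \<theta> r) \<longleftrightarrow> 1 - r \<le> 1 / (1 + cos \<theta>)"
    if "r \<le> 1" for r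
    using deph_nc_model_iff[OF _ \<open>cos \<theta> < 1\<close> that] \<open>0 < cos \<theta>\<close>
    by (simp add: le_divide_eq add_pos_pos)
  have "0 < 1 / (1 + cos \<theta>)" and "1 / (1 + cos \<theta>) \<le> 1"
    using \<open>0 < cos \<theta>\<close> by auto
  then show ?thesis
    unfolding one_minus_cos_div_sin_squared[OF \<open>0 < sin \<theta>\<close>[THEN less_imp_neq, symmetric]]
    using model_iff by auto
qed

end
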